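(* Let $n\ge1$, $\phi^{\mathrm{imp}}\in\mathbb R^{n\times n}$ and $g\in\mathbb R^{n\times n}$ be arbitrary, and define $\phi^+,\phi,g^+,g^{\mathrm{imp}}$ by the projection and gradient processing oracles in the context. Then $\phi\in\mathcal S(n)$ and for every $\phi^*\in\mathcal S(n)$, $$\langle g,\phi-\phi^*\rangle\le\langle g^{\mathrm{imp}},\phi^{\mathrm{imp}}-\phi^*\rangle.$$
   Context: $\mathcal S(n)$ is the set of $n\times n$ right stochastic matrices; matrix inner product $\langle x,y\rangle=\sum_{i,j}x_{i,j}y_{i,j}$; subscript $i$ on a matrix denotes its $i$-th row, and $\mathbf 1$ is the all-ones vector. Projection oracle: $\phi^+_{i,j}=\max\{\phi^{\mathrm{imp}}_{i,j},0\}$; then $\phi_i=\phi^+_i/\|\phi^+_i\|_1$ if $\|\phi^+_i\|_1>0$ and $\phi_i=(1/n,\dots,1/n)$ otherwise. Gradient processing oracle: $g^+_i=g_i-\langle g_i,\phi_i\rangle\mathbf 1$ for each row $i$; then $g^{\mathrm{imp}}_{i,j}=g^+_{i,j}$ if $\phi^{\mathrm{imp}}_{i,j}\ge0$ (equivalently $\phi^+_{i,j}=\phi^{\mathrm{imp}}_{i,j}$), and $g^{\mathrm{imp}}_{i,j}=\min\{g^+_{i,j},0\}$ otherwise. *)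

theory Defs
  imports "HOL-Analysis.Analysis"
begin

text \<open>n x n matrices are real^'n^'n (row i is M $ i, entry M $ i $ j);
  n = CARD('n) \<ge> 1 automatically.\<close>

definition right_stochastic :: "real^'n^'n \<Rightarrow> bool" where
  "right_stochastic M \<longleftrightarrow>
     (\<forall>i j. M $ i $ j \<ge> 0) \<and> (\<forall>i. (\<Sum>j\<in>UNIV. M $ i $ j) = 1)"

definition mat_inner :: "real^'n^'n \<Rightarrow> real^'n^'n \<Rightarrow> real" where
  "mat_inner x y = (\<Sum>i\<in>UNIV. \<Sum>j\<in>UNIV. x $ i $ j * y $ i $ j)"

definition phi_plus :: "real^'n^'n \<Rightarrow> real^'n^'n" where
  "phi_plus phi_imp = (\<chi> i j. max (phi_imp $ i $ j) 0)"

definition proj_oracle :: "real^'n^'n \<Rightarrow> real^'n^'n" where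
  "proj_oracle phi_imp =
     (\<chi> i j. let s = (\<Sum>k\<in>UNIV. phi_plus phi_imp $ i $ k) in
        if s > 0 then phi_plus phi_imp $ i $ j / s else 1 / real CARD('n))"

definition g_plus :: "real^'n^'n \<Rightarrow> real^'n^'n \<Rightarrow> real^'n^'n" where
  "g_plus phi_imp g =
     (\<chi> i j. g $ i $ j - (\<Sum>k\<in>UNIV. g $ i $ k * proj_oracle phi_imp $ i $ k))"

definition grad_oracle :: "real^'n^'n \<Rightarrow> real^'n^'n \<Rightarrow> real^'n^'n" where
  "grad_oracle phi_imp g =
     (\<chi> i j. if phi_imp $ i $ j \<ge> 0 then g_plus phi_imp g $ i $ j
             else min (g_plus phi_imp g $ i $ j) 0)"

end

theory Submission
  imports Defs
begin

text \<open>Write g+, g', x, x+ and p for the matrices g_plus, grad_oracle, phi_imp, phi_plus and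
  proj_oracle. Each row of g+ is the row of g shifted by a constant making it orthogonal to the
  probability vector p_i, so for stochastic q we get <g, p - q> = -<g+, q>. Clipping g+ to
  g' only lowers <g+, q> for nonnegative q and only raises <g+, x+> to <g', x>. Finally
  <g+, x+> = 0, because each row of x+ is a nonnegative multiple of the corresponding row of p.\<close>

lemma mat_inner_eq_inner: "mat_inner x y = inner x y"
  by (simp add: mat_inner_def inner_vec_def)

lemma inner_matrix_eq_sum: "inner x y = (\<Sum>i\<in>UNIV. \<Sum>j\<in>UNIV. x $ i $ j * y $ i $ j)"
  for x y :: "real^'n^'m"
  by (simp add: inner_vec_def)

lemma inner_matrix_mono:
  fixes x y z w :: "real^'n^'m"
  assumes "\<And>i j. x $ i $ j * y $ i $ j \<le> z $ i $ j * w $ i $ j"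
  shows "inner x y \<le> inner z w"
  unfolding inner_matrix_eq_sum by (intro sum_mono assms)

lemma phi_plus_nonneg: "phi_plus phi_imp $ i $ j \<ge> 0"
  by (simp add: phi_plus_def)

lemma phi_plus_eq_row_mass_times_proj_oracle:
  "phi_plus phi_imp $ i $ j
     = (\<Sum>k\<in>UNIV. phi_plus phi_imp $ i $ k) * proj_oracle phi_imp $ i $ j"
proof (cases "(\<Sum>k\<in>UNIV. phi_plus phi_imp $ i $ k) > 0")
  case True
  then show ?thesis by (simp add: proj_oracle_def)
next
  case False
  then have "(\<Sum>k\<in>UNIV. phi_plus phi_imp $ i $ k) = 0"
    using sum_nonneg[of UNIV "\<lambda>k. phi_plus phi_imp $ i $ k"] phi_plus_nonneg by force
  then have "\<forall>k\<in>UNIV. phi_plus phi_imp $ i $ k = 0"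
    by (subst (asm) sum_nonneg_eq_0_iff) (simp_all add: phi_plus_nonneg)
  then show ?thesis by simp
qed

lemma right_stochastic_proj_oracle: "right_stochastic (proj_oracle phi_imp)"
  unfolding right_stochastic_def
proof (intro conjI allI)
  fix i j
  show "proj_oracle phi_imp $ i $ j \<ge> 0"
    using phi_plus_nonneg[of phi_imp i j] by (simp add: proj_oracle_def Let_def)
next
  fix i
  define s where "s = (\<Sum>k\<in>UNIV. phi_plus phi_imp $ i $ k)"
  show "(\<Sum>j\<in>UNIV. proj_oracle phi_imp $ i $ j) = 1"
  proof (cases "s > 0")
    case True
    then have "(\<Sum>j\<in>UNIV. proj_oracle phi_imp $ i $ j) = (\<Sum>j\<in>UNIV. phi_plus phi_imp $ i $ j) / s"
      by (simp add: proj_oracle_def s_def[symmetric] sum_divide_distrib[symmetric])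
    with True show ?thesis by (simp add: s_def)
  qed (simp add: proj_oracle_def s_def[symmetric])
qed

lemma row_inner_g_plus:
  assumes "(\<Sum>j\<in>UNIV. q $ i $ j) = 1"
  shows "(\<Sum>j\<in>UNIV. g_plus phi_imp g $ i $ j * q $ i $ j)
     = (\<Sum>j\<in>UNIV. g $ i $ j * q $ i $ j) - (\<Sum>j\<in>UNIV. g $ i $ j * proj_oracle phi_imp $ i $ j)"
  using assms
  by (simp add: g_plus_def left_diff_distrib sum_subtractf sum_distrib_left[symmetric])

lemma row_inner_g_plus_proj_oracle:
  "(\<Sum>j\<in>UNIV. g_plus phi_imp g $ i $ j * proj_oracle phi_imp $ i $ j) = 0"
  using right_stochastic_proj_oracle[of phi_imp]
  by (simp add: row_inner_g_plus right_stochastic_def)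

lemma inner_g_plus_phi_plus: "inner (g_plus phi_imp g) (phi_plus phi_imp) = 0"
proof -
  have "(\<Sum>j\<in>UNIV. g_plus phi_imp g $ i $ j * phi_plus phi_imp $ i $ j) = 0" for i
    using row_inner_g_plus_proj_oracle[of phi_imp g i]
    by (subst phi_plus_eq_row_mass_times_proj_oracle)
       (simp add: mult.left_commute[of _ "sum _ _"] sum_distrib_left[symmetric])
  then show ?thesis by (simp add: inner_matrix_eq_sum)
qed

lemma inner_proj_oracle_diff_eq:
  assumes "right_stochastic q"
  shows "inner g (proj_oracle phi_imp - q) = - inner (g_plus phi_imp g) q"
  using assms
  by (simp add: inner_matrix_eq_sum row_inner_g_plus right_stochastic_def
      right_diff_distrib sum_subtractf sum_negf[symmetric])

lemma inner_g_plus_phi_plus_le_grad_oracle: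
  "inner (g_plus phi_imp g) (phi_plus phi_imp) \<le> inner (grad_oracle phi_imp g) phi_imp"
  by (rule inner_matrix_mono) (simp add: grad_oracle_def phi_plus_def mult_nonpos_nonpos)

lemma inner_grad_oracle_nonneg: "inner (grad_oracle phi_imp g) phi_imp \<ge> 0"
  using inner_g_plus_phi_plus_le_grad_oracle[of phi_imp g] by (simp add: inner_g_plus_phi_plus)

lemma inner_grad_oracle_le_g_plus:
  assumes "\<And>i j. q $ i $ j \<ge> 0"
  shows "inner (grad_oracle phi_imp g) q \<le> inner (g_plus phi_imp g) q"
  by (rule inner_matrix_mono) (simp add: grad_oracle_def assms mult_right_mono)

theorem lemma6:
  fixes phi_imp g :: "real^'n^'n"
  shows "right_stochastic (proj_oracle phi_imp) \<and>
    (\<forall>phi_star :: real^'n^'n. right_stochastic phi_star \<longrightarrow>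
       mat_inner g (proj_oracle phi_imp - phi_star)
         \<le> mat_inner (grad_oracle phi_imp g) (phi_imp - phi_star))"
proof (intro conjI allI impI)
  show "right_stochastic (proj_oracle phi_imp)" by (rule right_stochastic_proj_oracle)
next
  fix phi_star :: "real^'n^'n"
  assume star: "right_stochastic phi_star"
  then have star_nonneg: "\<And>i j. phi_star $ i $ j \<ge> 0" by (simp add: right_stochastic_def)
  have "mat_inner g (proj_oracle phi_imp - phi_star) = - inner (g_plus phi_imp g) phi_star"
    using star by (simp add: mat_inner_eq_inner inner_proj_oracle_diff_eq)
  also have "\<dots> \<le> - inner (grad_oracle phi_imp g) phi_star"
    using inner_grad_oracle_le_g_plus[OF star_nonneg] by simp
  also have "\<dots> \<le> inner (grad_oracle phi_imp g) phi_imp - inner (grad_oracle phi_imp g) phi_star"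
    using inner_grad_oracle_nonneg[of phi_imp g] by simp
  also have "\<dots> = mat_inner (grad_oracle phi_imp g) (phi_imp - phi_star)"
    by (simp add: mat_inner_eq_inner inner_diff_right)
  finally show "mat_inner g (proj_oracle phi_imp - phi_star)
         \<le> mat_inner (grad_oracle phi_imp g) (phi_imp - phi_star)" .
qed

end
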